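(* Let $H$ be a Hilbert space, $A,B$ strictly positive bounded operators on $H$, $\mu\in\mathbb{R}$ and $\lambda>0$. Then, in the operator order, $$S_{\mu-2\lambda}(A|B)\le \tilde T_{\mu,2,-\lambda}(A|B)\le S_{\mu-\lambda}(A|B)\le \tilde T_{\mu,1,-\lambda}(A|B)\le S_\mu(A|B)$$ $$\le \tilde T_{\mu,1,\lambda}(A|B)\le S_{\mu+\lambda}(A|B)\le \tilde T_{\mu,2,\lambda}(A|B)\le S_{\mu+2\lambda}(A|B).$$
   Context: A bounded operator $T$ on $H$ is strictly positive ($T>0$) if $(Tx,x)\ge0$ for all $x$ and $T$ is invertible; $X\le Y$ means $((Y-X)x,x)\ge 0$ for all $x$. Powers and $\log$ of strictly positive operators are defined by functional calculus. For $A>0$, $B>0$ and $\nu\in\mathbb{R}$: $A\natural_\nu B=A^{1/2}(A^{-1/2}BA^{-1/2})^{\nu}A^{1/2}$, and the generalized relative operator entropy is $S_\nu(A|B)=A^{1/2}(A^{-1/2}BA^{-1/2})^{\nu}(\log A^{-1/2}BA^{-1/2})A^{1/2}$. For $\lambda,\mu\in\mathbb{R}$, $\lambda\ne 0$, $k\in\mathbb{Z}$, the generalized Tsallis relative operator entropy is $\tilde T_{\mu,k,\lambda}(A|B)=\dfrac{A\natural_{\mu+k\lambda}B-A\natural_{\mu+(k-1)\lambda}B}{\lambda}$. *)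

theory Defs
  imports "HOL-Analysis.Analysis" "HOL-Computational_Algebra.Polynomial"
begin

definition bl_invertible :: "('a::real_normed_vector \<Rightarrow>\<^sub>L 'a) \<Rightarrow> bool" where
  "bl_invertible T \<longleftrightarrow> (\<exists>S. T o\<^sub>L S = id_blinfun \<and> S o\<^sub>L T = id_blinfun)"

definition self_adjoint :: "('a::real_inner \<Rightarrow>\<^sub>L 'a) \<Rightarrow> bool" where
  "self_adjoint T \<longleftrightarrow> (\<forall>x y. inner (T x) y = inner x (T y))"

definition strictly_positive :: "('a::real_inner \<Rightarrow>\<^sub>L 'a) \<Rightarrow> bool" where
  "strictly_positive T \<longleftrightarrow> self_adjoint T \<and> (\<forall>x. inner (T x) x \<ge> 0) \<and> bl_invertible T"

definition op_le :: "('a::real_inner \<Rightarrow>\<^sub>L 'a) \<Rightarrow> ('a \<Rightarrow>\<^sub>L 'a) \<Rightarrow> bool" where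
  "op_le X Y \<longleftrightarrow> (\<forall>x. inner ((Y - X) x) x \<ge> 0)"

fun bl_pow :: "('a::real_normed_vector \<Rightarrow>\<^sub>L 'a) \<Rightarrow> nat \<Rightarrow> ('a \<Rightarrow>\<^sub>L 'a)" where
  "bl_pow T 0 = id_blinfun"
| "bl_pow T (Suc n) = T o\<^sub>L bl_pow T n"

definition poly_op :: "real poly \<Rightarrow> ('a::real_normed_vector \<Rightarrow>\<^sub>L 'a) \<Rightarrow> ('a \<Rightarrow>\<^sub>L 'a)" where
  "poly_op p T = (\<Sum>i\<le>degree p. coeff p i *\<^sub>R bl_pow T i)"

definition op_spectrum :: "('a::real_normed_vector \<Rightarrow>\<^sub>L 'a) \<Rightarrow> real set" where
  "op_spectrum T = {t. \<not> bl_invertible (T - t *\<^sub>R id_blinfun)}"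

definition fcalc :: "(real \<Rightarrow> real) \<Rightarrow> ('a::{real_inner,complete_space} \<Rightarrow>\<^sub>L 'a) \<Rightarrow> ('a \<Rightarrow>\<^sub>L 'a)" where
  "fcalc f T = (THE S. \<forall>p :: nat \<Rightarrow> real poly.
      uniform_limit (op_spectrum T) (\<lambda>n x. poly (p n) x) f sequentially \<longrightarrow>
      (\<lambda>n. poly_op (p n) T) \<longlonglongrightarrow> S)"

definition op_powr :: "('a::{real_inner,complete_space} \<Rightarrow>\<^sub>L 'a) \<Rightarrow> real \<Rightarrow> ('a \<Rightarrow>\<^sub>L 'a)" where
  "op_powr T r = fcalc (\<lambda>t. t powr r) T"

definition op_log :: "('a::{real_inner,complete_space} \<Rightarrow>\<^sub>L 'a) \<Rightarrow> ('a \<Rightarrow>\<^sub>L 'a)" where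
  "op_log T = fcalc ln T"

definition inner_op :: "('a::{real_inner,complete_space} \<Rightarrow>\<^sub>L 'a) \<Rightarrow> ('a \<Rightarrow>\<^sub>L 'a) \<Rightarrow> ('a \<Rightarrow>\<^sub>L 'a)" where
  "inner_op A B = op_powr A (-1/2) o\<^sub>L B o\<^sub>L op_powr A (-1/2)"

definition gmean :: "real \<Rightarrow> ('a::{real_inner,complete_space} \<Rightarrow>\<^sub>L 'a) \<Rightarrow> ('a \<Rightarrow>\<^sub>L 'a) \<Rightarrow> ('a \<Rightarrow>\<^sub>L 'a)" where
  "gmean \<nu> A B = op_powr A (1/2) o\<^sub>L op_powr (inner_op A B) \<nu> o\<^sub>L op_powr A (1/2)"

definition rel_entropy :: "real \<Rightarrow> ('a::{real_inner,complete_space} \<Rightarrow>\<^sub>L 'a) \<Rightarrow> ('a \<Rightarrow>\<^sub>L 'a) \<Rightarrow> ('a \<Rightarrow>\<^sub>L 'a)" where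
  "rel_entropy \<nu> A B = op_powr A (1/2) o\<^sub>L op_powr (inner_op A B) \<nu> o\<^sub>L op_log (inner_op A B) o\<^sub>L op_powr A (1/2)"

definition tsallis :: "real \<Rightarrow> int \<Rightarrow> real \<Rightarrow> ('a::{real_inner,complete_space} \<Rightarrow>\<^sub>L 'a) \<Rightarrow> ('a \<Rightarrow>\<^sub>L 'a) \<Rightarrow> ('a \<Rightarrow>\<^sub>L 'a)" where
  "tsallis \<mu> k lam A B = (1 / lam) *\<^sub>R (gmean (\<mu> + of_int k * lam) A B - gmean (\<mu> + (of_int k - 1) * lam) A B)"

end

theory Submission
  imports Defs "HOL-Computational_Algebra.Fundamental_Theorem_Algebra"
begin

text \<open>Put \<open>X = A^(-1/2) B A^(-1/2)\<close>, which is again strictly positive. Every operator in the chain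
  is a congruence \<open>A^(1/2) f(X) A^(1/2)\<close>: the relative entropy \<open>S\<^sub>\<nu>\<close> uses \<open>f(t) = t^\<nu> ln t\<close>,
  and after normalising \<open>k\<close> and the sign of \<open>\<lambda>\<close> each Tsallis entropy uses
  \<open>f(t) = (t^(\<nu>+\<lambda>) - t^\<nu>) / \<lambda>\<close>. For \<open>t > 0\<close> these functions satisfy
  \<open>t^\<nu> ln t \<le> (t^(\<nu>+\<lambda>) - t^\<nu>) / \<lambda> \<le> t^(\<nu>+\<lambda>) ln t\<close>, and both inequalities pass to the
  operators because the functional calculus is positive and congruence by the self-adjoint
  \<open>A^(1/2)\<close> preserves the operator order.

  The functional calculus is a norm limit of polynomials in the operator. Its algebraic and order
  properties rest on the bound \<open>\<parallel>q(T)\<parallel> \<le> max {\<bar>q t\<bar> | t \<in> \<sigma>(T)}\<close> for self-adjoint \<open>T\<close>, which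
  follows from the spectral mapping inclusion \<open>\<sigma>(q(T)) \<subseteq> q(\<sigma>(T))\<close>; that inclusion is proved
  by splitting \<open>q\<close> into real linear and positive definite quadratic factors.\<close>

section \<open>Invertible operators\<close>

lemma blinfun_compose_eq_id_apply:
  assumes "S o\<^sub>L S' = id_blinfun"
  shows "S (S' x) = x"
  by (metis assms blinfun_apply_blinfun_compose blinfun_apply_id_blinfun)

lemma bl_invertible_compose:
  assumes "bl_invertible S" and "bl_invertible T"
  shows "bl_invertible (S o\<^sub>L T)"
proof -
  obtain S' where S': "S o\<^sub>L S' = id_blinfun" "S' o\<^sub>L S = id_blinfun"
    using assms(1) unfolding bl_invertible_def by blast
  obtain T' where T': "T o\<^sub>L T' = id_blinfun" "T' o\<^sub>L T = id_blinfun"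
    using assms(2) unfolding bl_invertible_def by blast
  have "(S o\<^sub>L T) o\<^sub>L (T' o\<^sub>L S') = id_blinfun" "(T' o\<^sub>L S') o\<^sub>L (S o\<^sub>L T) = id_blinfun"
    by (auto intro!: blinfun_eqI simp: blinfun_compose_eq_id_apply S' T')
  then show ?thesis unfolding bl_invertible_def by blast
qed

lemma bl_invertible_uminus:
  assumes "bl_invertible S"
  shows "bl_invertible (- S)"
proof -
  obtain S' where S': "S o\<^sub>L S' = id_blinfun" "S' o\<^sub>L S = id_blinfun"
    using assms unfolding bl_invertible_def by blast
  have "(- S) o\<^sub>L (- S') = id_blinfun" "(- S') o\<^sub>L (- S) = id_blinfun"
    by (auto intro!: blinfun_eqI simp: blinfun.minus_left blinfun.minus_right
        blinfun_compose_eq_id_apply S')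
  then show ?thesis unfolding bl_invertible_def by blast
qed

lemma bl_invertible_scaleR_id:
  assumes "c \<noteq> 0"
  shows "bl_invertible (c *\<^sub>R (id_blinfun :: 'a::real_normed_vector \<Rightarrow>\<^sub>L 'a))"
  unfolding bl_invertible_def
  by (rule exI[of _ "(1/c) *\<^sub>R id_blinfun"]) (auto intro!: blinfun_eqI simp: blinfun.scaleR_left assms)

lemma bl_invertible_trivial_space:
  fixes T :: "'a::real_normed_vector \<Rightarrow>\<^sub>L 'a"
  assumes "\<And>x::'a. x = 0"
  shows "bl_invertible T"
proof -
  have "T o\<^sub>L T = id_blinfun" by (rule blinfun_eqI) (metis assms)
  then show ?thesis unfolding bl_invertible_def by blast
qed

lemma bl_invertible_bounded_below:
  fixes T :: "'a::real_normed_vector \<Rightarrow>\<^sub>L 'a"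
  assumes "bl_invertible T"
  obtains c where "c > 0" and "\<And>x. c * norm x \<le> norm (T x)"
proof -
  obtain S where S: "S o\<^sub>L T = id_blinfun"
    using assms unfolding bl_invertible_def by blast
  have K: "0 < norm S + 1" by (simp add: add_nonneg_pos)
  have "norm x \<le> (norm S + 1) * norm (T x)" for x
  proof -
    have "norm x = norm (S (T x))" by (simp add: blinfun_compose_eq_id_apply[OF S])
    also have "\<dots> \<le> norm S * norm (T x)" by (rule norm_blinfun)
    also have "\<dots> \<le> (norm S + 1) * norm (T x)" by (simp add: mult_right_mono)
    finally show ?thesis .
  qed
  then have "1 / (norm S + 1) * norm x \<le> norm (T x)" for x
    using K by (simp add: divide_le_eq mult.commute)
  with K show thesis by (intro that[of "1 / (norm S + 1)"]) auto
qed

lemma bl_invertible_if_surj_bounded_below: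
  fixes T :: "'a::real_normed_vector \<Rightarrow>\<^sub>L 'a"
  assumes surj: "\<And>y. \<exists>x. T x = y" and c: "c > 0" and below: "\<And>x. c * norm x \<le> norm (T x)"
  shows "bl_invertible T"
proof -
  define g where "g y = (SOME x. T x = y)" for y
  have Tg: "T (g y) = y" for y
    unfolding g_def by (rule someI_ex[OF surj])
  have inj: "x = x'" if "T x = T x'" for x x'
  proof -
    from that have "T (x - x') = 0" by (simp add: blinfun.diff_right)
    then have "c * norm (x - x') \<le> 0" using below[of "x - x'"] by simp
    then show "x = x'" using c by (simp add: mult_le_0_iff)
  qed
  have bl: "bounded_linear g"
  proof (rule bounded_linear_intro[where K = "1/c"])
    show "g (x + y) = g x + g y" for x y
      by (rule inj) (simp only: Tg blinfun.add_right)
    show "g (r *\<^sub>R x) = r *\<^sub>R g x" for r x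
      by (rule inj) (simp only: Tg blinfun.scaleR_right)
    show "norm (g x) \<le> norm x * (1 / c)" for x
      using below[of "g x"] c by (simp add: Tg pos_le_divide_eq mult.commute)
  qed
  have "T o\<^sub>L Blinfun g = id_blinfun"
    by (rule blinfun_eqI) (simp add: bounded_linear_Blinfun_apply[OF bl] Tg)
  moreover have "Blinfun g o\<^sub>L T = id_blinfun"
    by (rule blinfun_eqI) (simp add: bounded_linear_Blinfun_apply[OF bl] inj Tg)
  ultimately show ?thesis unfolding bl_invertible_def by blast
qed

section \<open>Positive and coercive operators\<close>

lemma self_adjointD: "self_adjoint T \<Longrightarrow> inner (T x) y = inner x (T y)"
  unfolding self_adjoint_def by blast

lemma norm_diff_sq:
  fixes a b :: "'a::real_inner"
  shows "(norm (a - b))^2 = (norm a)^2 - 2 * inner a b + (norm b)^2"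
  by (simp add: power2_norm_eq_inner inner_diff_left inner_diff_right inner_commute)

lemma inner_apply_le_norm:
  fixes S :: "'a::real_inner \<Rightarrow>\<^sub>L 'a"
  shows "inner (S x) x \<le> norm S * (norm x)^2"
proof -
  have "inner (S x) x \<le> norm (S x) * norm x" by (rule norm_cauchy_schwarz)
  also have "\<dots> \<le> norm S * norm x * norm x" by (intro mult_right_mono norm_blinfun) simp
  finally show ?thesis by (simp add: power2_eq_square mult.assoc)
qed

lemma positive_inner_Cauchy_Schwarz:
  fixes P :: "'a::real_inner \<Rightarrow>\<^sub>L 'a"
  assumes sa: "self_adjoint P" and pos: "\<And>x. 0 \<le> inner (P x) x"
  shows "(inner (P x) y)^2 \<le> inner (P x) x * inner (P y) y"
proof -
  define a b c where "a = inner (P x) x" and "b = inner (P x) y" and "c = inner (P y) y"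
  have quadratic: "0 \<le> a + 2 * t * b + t^2 * c" for t
  proof -
    have "0 \<le> inner (P (x + t *\<^sub>R y)) (x + t *\<^sub>R y)" by (rule pos)
    also have "\<dots> = a + 2 * t * b + t^2 * c"
      using self_adjointD[OF sa, of y x]
      by (simp add: a_def b_def c_def blinfun.add_right blinfun.scaleR_right inner_add_left
          inner_add_right inner_commute power2_eq_square algebra_simps)
    finally show ?thesis .
  qed
  show ?thesis
  proof (cases "c = 0")
    case True
    have "b = 0"
    proof (rule ccontr)
      assume "b \<noteq> 0"
      have "0 \<le> a + 2 * (- (a + 1) / (2 * b)) * b + (- (a + 1) / (2 * b))^2 * c" by (rule quadratic)
      also have "\<dots> = -1" using \<open>b \<noteq> 0\<close> True by (simp add: field_simps)
      finally show False by simp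
    qed
    with True show ?thesis by (simp add: a_def b_def c_def)
  next
    case False
    then have "c > 0" using pos[of y] by (simp add: c_def)
    have "0 \<le> a + 2 * (- b / c) * b + (- b / c)^2 * c" by (rule quadratic)
    also have "\<dots> = (a * c - b^2) / c" using \<open>c > 0\<close> by (simp add: field_simps power2_eq_square)
    finally show ?thesis using \<open>c > 0\<close> by (simp add: a_def b_def c_def zero_le_divide_iff)
  qed
qed

lemma positive_norm_apply_sq_le:
  fixes P :: "'a::real_inner \<Rightarrow>\<^sub>L 'a"
  assumes sa: "self_adjoint P" and pos: "\<And>x. 0 \<le> inner (P x) x"
  shows "(norm (P x))^2 \<le> norm P * inner (P x) x"
proof (cases "P x = 0")
  case True
  then show ?thesis using pos[of x] by simp
next
  case False
  have "(norm (P x))^2 * (norm (P x))^2 = (inner (P x) (P x))^2"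
    by (metis power2_norm_eq_inner power2_eq_square)
  also have "\<dots> \<le> inner (P x) x * inner (P (P x)) (P x)"
    by (rule positive_inner_Cauchy_Schwarz[OF sa pos])
  also have "\<dots> \<le> inner (P x) x * (norm P * (norm (P x))^2)"
    by (intro mult_left_mono inner_apply_le_norm pos)
  finally have "(norm (P x))^2 * (norm (P x))^2 \<le> (norm P * inner (P x) x) * (norm (P x))^2"
    by (simp add: mult_ac)
  then show ?thesis by (rule mult_right_le_imp_le) (use False in simp)
qed

lemma strictly_positive_coercive:
  fixes A :: "'a::real_inner \<Rightarrow>\<^sub>L 'a"
  assumes "strictly_positive A"
  obtains c where "c > 0" and "\<And>x. c * (norm x)^2 \<le> inner (A x) x"
proof -
  have sa: "self_adjoint A" and pos: "\<And>x. 0 \<le> inner (A x) x" and inv: "bl_invertible A"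
    using assms unfolding strictly_positive_def by auto
  obtain d where d: "d > 0" "\<And>x. d * norm x \<le> norm (A x)"
    using bl_invertible_bounded_below[OF inv] by blast
  have K: "0 < norm A + 1" by (simp add: add_nonneg_pos)
  have "d^2 / (norm A + 1) * (norm x)^2 \<le> inner (A x) x" for x
  proof -
    have "(d * norm x)^2 \<le> (norm (A x))^2" using d by (intro power_mono) auto
    also have "\<dots> \<le> norm A * inner (A x) x" by (rule positive_norm_apply_sq_le[OF sa pos])
    also have "\<dots> \<le> (norm A + 1) * inner (A x) x" by (intro mult_right_mono pos) simp
    finally show ?thesis using K by (simp add: field_simps power_mult_distrib)
  qed
  with d K show thesis by (intro that[of "d^2 / (norm A + 1)"]) auto
qed

lemma coercive_bounded_below:
  fixes S :: "'a::real_inner \<Rightarrow>\<^sub>L 'a"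
  assumes "\<And>x. c * (norm x)^2 \<le> inner (S x) x"
  shows "c * norm x \<le> norm (S x)"
proof (cases "x = 0")
  case False
  have "c * norm x * norm x \<le> norm (S x) * norm x"
    using assms[of x] norm_cauchy_schwarz[of "S x" x] by (simp add: power2_eq_square mult.assoc)
  with False show ?thesis by simp
qed simp

lemma coercive_contraction:
  fixes S :: "'a::real_inner \<Rightarrow>\<^sub>L 'a"
  assumes c: "c > 0" and coercive: "\<And>x. c * (norm x)^2 \<le> inner (S x) x"
    and N: "norm S \<le> N" "c \<le> N"
  shows "norm (x - (c / N^2) *\<^sub>R S x) \<le> sqrt (1 - c^2 / N^2) * norm x"
proof -
  define t where "t = c / N^2"
  have "0 < N" using c N by linarith
  have ratio: "c^2 / N^2 \<le> 1" using c N by (simp add: power_mono)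
  have t: "0 < t" using c \<open>0 < N\<close> by (simp add: t_def)
  have "norm (S x) \<le> N * norm x"
    by (intro order_trans[OF norm_blinfun] mult_right_mono) (use N in auto)
  then have SN: "(norm (S x))^2 \<le> N^2 * (norm x)^2"
    by (metis norm_ge_zero power_mono power_mult_distrib)
  have "(norm (x - t *\<^sub>R S x))^2 = (norm x)^2 - 2 * inner x (t *\<^sub>R S x) + (norm (t *\<^sub>R S x))^2"
    by (rule norm_diff_sq)
  also have "\<dots> = (norm x)^2 - 2 * t * inner (S x) x + t^2 * (norm (S x))^2"
    by (simp add: inner_commute power_mult_distrib)
  also have "\<dots> \<le> (norm x)^2 - 2 * t * (c * (norm x)^2) + t^2 * (N^2 * (norm x)^2)"
    using coercive[of x] SN t by (intro add_mono diff_mono mult_left_mono) auto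
  also have "\<dots> = (1 - c^2 / N^2) * (norm x)^2"
    using \<open>0 < N\<close> by (simp add: t_def field_simps power2_eq_square)
  also have "\<dots> = (sqrt (1 - c^2 / N^2) * norm x)^2"
    using ratio by (simp add: power_mult_distrib)
  finally show ?thesis
    unfolding t_def by (rule power2_le_imp_le) (use ratio in simp)
qed

text \<open>Lax--Milgram: the map \<open>z \<mapsto> z - t S z + t y\<close> is a contraction, and its fixed point
  solves \<open>S z = y\<close>.\<close>
lemma bl_invertible_if_coercive:
  fixes S :: "'a::{real_inner,complete_space} \<Rightarrow>\<^sub>L 'a"
  assumes c: "c > 0" and coercive: "\<And>x. c * (norm x)^2 \<le> inner (S x) x"
  shows "bl_invertible S"
proof -
  define N where "N = norm S + c"
  define t where "t = c / N^2"
  define q where "q = sqrt (1 - c^2 / N^2)"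
  have N: "norm S \<le> N" "c \<le> N" "0 < N" using c by (simp_all add: N_def add_nonneg_pos)
  have "0 < c^2 / N^2" "c^2 / N^2 \<le> 1" using c N by (simp_all add: power_mono)
  then have q: "0 \<le> q" "q < 1" by (simp_all add: q_def)
  have t: "0 < t" using c N by (simp add: t_def)
  have "\<exists>z. S z = y" for y
  proof -
    have "dist (z - t *\<^sub>R S z + t *\<^sub>R y) (z' - t *\<^sub>R S z' + t *\<^sub>R y) \<le> q * dist z z'" for z z'
      using coercive_contraction[OF c coercive N(1,2), of "z - z'", folded t_def q_def]
      by (simp add: dist_norm blinfun.diff_right scaleR_diff_right algebra_simps)
    then obtain z where "z - t *\<^sub>R S z + t *\<^sub>R y = z"
      using banach_fix_type[OF q, of "\<lambda>z. z - t *\<^sub>R S z + t *\<^sub>R y"] by blast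
    with t show ?thesis by (auto simp: algebra_simps)
  qed
  then show ?thesis
    by (rule bl_invertible_if_surj_bounded_below[OF _ c coercive_bounded_below[OF coercive]])
qed

section \<open>Polynomials in an operator\<close>

lemma poly_op_upto:
  assumes "degree p \<le> n"
  shows "poly_op p T = (\<Sum>i\<le>n. coeff p i *\<^sub>R bl_pow T i)"
  unfolding poly_op_def
  by (rule sum.mono_neutral_left) (use assms in \<open>auto simp: coeff_eq_0\<close>)

lemma poly_op_pCons_apply: "poly_op (pCons a p) T x = a *\<^sub>R x + T (poly_op p T x)"
proof -
  have apply_upto: "poly_op q T x = (\<Sum>i\<le>n. coeff q i *\<^sub>R bl_pow T i x)" if "degree q \<le> n" for q n
    by (simp add: poly_op_upto[OF that] blinfun.sum_left blinfun.scaleR_left)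
  have "poly_op (pCons a p) T x = (\<Sum>i\<le>Suc (degree p). coeff (pCons a p) i *\<^sub>R bl_pow T i x)"
    by (rule apply_upto) (rule degree_pCons_le)
  also have "\<dots> = a *\<^sub>R x + (\<Sum>i\<le>degree p. coeff p i *\<^sub>R T (bl_pow T i x))"
    by (subst sum.atMost_Suc_shift) simp
  also have "(\<Sum>i\<le>degree p. coeff p i *\<^sub>R T (bl_pow T i x)) = T (poly_op p T x)"
    by (simp add: apply_upto[OF order_refl] blinfun.sum_right blinfun.scaleR_right)
  finally show ?thesis .
qed

lemma poly_op_0 [simp]: "poly_op 0 T = 0"
  by (simp add: poly_op_def)

lemma poly_op_const: "poly_op [:a:] T = a *\<^sub>R id_blinfun"
  by (rule blinfun_eqI) (simp add: poly_op_pCons_apply blinfun.scaleR_left)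

lemma poly_op_add: "poly_op (p + q) T = poly_op p T + poly_op q T"
proof -
  define n where "n = max (degree p) (degree q)"
  have "degree (p + q) \<le> n" "degree p \<le> n" "degree q \<le> n"
    unfolding n_def by (auto intro: degree_add_le)
  then show ?thesis by (simp add: poly_op_upto scaleR_add_left sum.distrib)
qed

lemma poly_op_smult: "poly_op (smult c p) T = c *\<^sub>R poly_op p T"
  by (simp add: poly_op_upto[of "smult c p" "degree p"] poly_op_upto[of p "degree p"]
      scaleR_sum_right)

lemma poly_op_diff: "poly_op (p - q) T = poly_op p T - poly_op q T"
proof -
  have "poly_op (- q) T = - poly_op q T" using poly_op_smult[of "-1" q T] by simp
  then show ?thesis using poly_op_add[of p "- q" T] by simp
qed

lemma poly_op_mult: "poly_op (p * q) T = poly_op p T o\<^sub>L poly_op q T"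
proof (induction p)
  case (pCons a p)
  show ?case
    by (rule blinfun_eqI) (simp add: poly_op_pCons_apply poly_op_add poly_op_smult pCons.IH
        blinfun.add_left blinfun.scaleR_left)
qed simp

lemma poly_op_linear: "poly_op [:- r, 1:] T = T - r *\<^sub>R id_blinfun"
  by (rule blinfun_eqI) (simp add: poly_op_pCons_apply blinfun.diff_left blinfun.scaleR_left)

lemma poly_op_commute_apply: "T (poly_op p T x) = poly_op p T (T x)"
proof -
  have "poly_op ([:0, 1:] * p) T x = poly_op (p * [:0, 1:]) T x" by (simp only: mult.commute)
  then show ?thesis by (simp only: poly_op_mult poly_op_linear[of 0, simplified]) simp
qed

lemma self_adjoint_poly_op:
  assumes sa: "self_adjoint T"
  shows "self_adjoint (poly_op p T)"
proof (induction p)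
  case (pCons a p)
  show ?case unfolding self_adjoint_def
  proof (intro allI)
    fix x y
    have "inner (T (poly_op p T x)) y = inner x (T (poly_op p T y))"
      using self_adjointD[OF sa] self_adjointD[OF pCons.IH] by (simp add: poly_op_commute_apply)
    then show "inner (poly_op (pCons a p) T x) y = inner x (poly_op (pCons a p) T y)"
      by (simp add: poly_op_pCons_apply inner_add_left inner_add_right)
  qed
qed (simp add: self_adjoint_def)

lemma poly_op_quadratic_coercive:
  assumes sa: "self_adjoint T"
  shows "b^2 * (norm x)^2 \<le> inner (poly_op [:a^2 + b^2, -2*a, 1:] T x) x"
proof -
  have TT: "inner (T (T x)) x = (norm (T x))^2"
    by (simp add: self_adjointD[OF sa] power2_norm_eq_inner)
  have "inner (poly_op [:a^2 + b^2, -2*a, 1:] T x) x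
      = (a^2 + b^2) * (norm x)^2 - 2 * a * inner (T x) x + (norm (T x))^2"
    by (simp add: poly_op_pCons_apply blinfun.bilinear_simps inner_add_left inner_diff_left TT
        power2_norm_eq_inner)
  also have "\<dots> = (norm (T x - a *\<^sub>R x))^2 + b^2 * (norm x)^2"
    by (simp add: norm_diff_sq power_mult_distrib inner_commute algebra_simps)
  finally show ?thesis by simp
qed

section \<open>The spectrum of a self-adjoint operator\<close>

lemma self_adjoint_norm_sq_bound:
  fixes S :: "'a::real_inner \<Rightarrow>\<^sub>L 'a"
  assumes sa: "self_adjoint S"
  shows "(norm (S (S x) - (norm S)^2 *\<^sub>R x))^2
    \<le> (norm S)^2 * ((norm S)^2 * (norm x)^2 - (norm (S x))^2)"
proof -
  define N where "N = norm S"
  have SS: "inner (S (S x)) x = (norm (S x))^2"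
    by (simp add: self_adjointD[OF sa] power2_norm_eq_inner)
  have "norm (S (S x)) \<le> N * norm (S x)" unfolding N_def by (rule norm_blinfun)
  then have SS_le: "(norm (S (S x)))^2 \<le> N^2 * (norm (S x))^2"
    by (metis norm_ge_zero power_mono power_mult_distrib)
  have "(norm (S (S x) - N^2 *\<^sub>R x))^2 = (norm (S (S x)))^2 - 2 * N^2 * (norm (S x))^2 + N^2 * N^2 * (norm x)^2"
    by (simp add: norm_diff_sq SS power_mult_distrib power2_eq_square[of "N^2"])
  also have "\<dots> \<le> N^2 * (N^2 * (norm x)^2 - (norm (S x))^2)"
    using SS_le by (simp add: algebra_simps)
  finally show ?thesis by (simp add: N_def)
qed

text \<open>If \<open>S - \<parallel>S\<parallel>\<close> and \<open>S + \<parallel>S\<parallel>\<close> were both invertible, their product \<open>S\<^sup>2 - \<parallel>S\<parallel>\<^sup>2\<close> would be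
  bounded below by some \<open>d > 0\<close>, and the previous estimate would give
  \<open>\<parallel>S\<parallel>\<^sup>2 \<le> \<parallel>S\<parallel>\<^sup>2 - d\<^sup>2 / \<parallel>S\<parallel>\<^sup>2\<close>.\<close>
lemma self_adjoint_norm_in_op_spectrum:
  fixes S :: "'a::{real_inner,complete_space} \<Rightarrow>\<^sub>L 'a"
  assumes sa: "self_adjoint S" and "norm S > 0"
  shows "norm S \<in> op_spectrum S \<or> - norm S \<in> op_spectrum S"
proof (rule ccontr)
  define N where "N = norm S"
  have N: "0 < N" using assms(2) by (simp add: N_def)
  assume "\<not> (norm S \<in> op_spectrum S \<or> - norm S \<in> op_spectrum S)"
  then have "bl_invertible ((S - N *\<^sub>R id_blinfun) o\<^sub>L (S - (- N) *\<^sub>R id_blinfun))"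
    by (intro bl_invertible_compose) (auto simp: op_spectrum_def N_def)
  also have "(S - N *\<^sub>R id_blinfun) o\<^sub>L (S - (- N) *\<^sub>R id_blinfun) = (S o\<^sub>L S) - N^2 *\<^sub>R id_blinfun"
    by (rule blinfun_eqI) (simp add: blinfun.bilinear_simps power2_eq_square algebra_simps)
  finally obtain d where d: "d > 0" "\<And>x. d * norm x \<le> norm (((S o\<^sub>L S) - N^2 *\<^sub>R id_blinfun) x)"
    by (elim bl_invertible_bounded_below) blast
  define r where "r = N^2 - d^2 / N^2"
  have "norm (S x) \<le> sqrt (max r 0) * norm x" for x
  proof (rule power2_le_imp_le)
    have "(d * norm x)^2 \<le> (norm (S (S x) - N^2 *\<^sub>R x))^2"
      using d(1) d(2)[of x] by (intro power_mono) (simp_all add: blinfun.bilinear_simps)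
    also have "\<dots> \<le> N^2 * (N^2 * (norm x)^2 - (norm (S x))^2)"
      using self_adjoint_norm_sq_bound[OF sa, of x] by (simp add: N_def)
    finally have "d^2 * (norm x)^2 / N^2 \<le> N^2 * (norm x)^2 - (norm (S x))^2"
      using N by (simp add: pos_divide_le_eq power_mult_distrib mult.commute)
    then have "(norm (S x))^2 \<le> r * (norm x)^2" by (simp add: r_def algebra_simps)
    also have "\<dots> \<le> max r 0 * (norm x)^2" by (intro mult_right_mono) auto
    finally show "(norm (S x))^2 \<le> (sqrt (max r 0) * norm x)^2" by (simp add: power_mult_distrib)
  qed simp
  then have "N \<le> sqrt (max r 0)" unfolding N_def by (intro norm_blinfun_bound) auto
  then have "N^2 \<le> (sqrt (max r 0))^2" using N by (intro power_mono) auto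
  then have "N^2 \<le> max r 0" by simp
  moreover have "r < N^2" "0 < N^2" using d(1) N by (simp_all add: r_def)
  ultimately show False by linarith
qed

lemma op_spectrum_nonempty:
  fixes S :: "'a::{real_inner,complete_space} \<Rightarrow>\<^sub>L 'a"
  assumes sa: "self_adjoint S" and "(x::'a) \<noteq> 0"
  shows "op_spectrum S \<noteq> {}"
proof (cases "norm S > 0")
  case True
  then show ?thesis using self_adjoint_norm_in_op_spectrum[OF sa] by blast
next
  case False
  then have "S = 0" by simp
  have "id_blinfun \<noteq> (0 :: 'a \<Rightarrow>\<^sub>L 'a)"
    using \<open>x \<noteq> 0\<close> by (metis blinfun_apply_id_blinfun blinfun.zero_left)
  then have "\<not> bl_invertible (0 :: 'a \<Rightarrow>\<^sub>L 'a)" by (simp add: bl_invertible_def)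
  with \<open>S = 0\<close> have "0 \<in> op_spectrum S" by (simp add: op_spectrum_def)
  then show ?thesis by blast
qed

lemma op_spectrum_subset_if_coercive:
  fixes T :: "'a::{real_inner,complete_space} \<Rightarrow>\<^sub>L 'a"
  assumes c: "c > 0" and coercive: "\<And>x. c * (norm x)^2 \<le> inner (T x) x"
  shows "op_spectrum T \<subseteq> {c .. norm T}"
proof
  fix t assume "t \<in> op_spectrum T"
  show "t \<in> {c .. norm T}"
  proof (rule ccontr)
    assume "t \<notin> {c .. norm T}"
    then consider "t < c" | "norm T < t" by force
    then have "bl_invertible (T - t *\<^sub>R id_blinfun)"
    proof cases
      case 1
      show ?thesis
      proof (rule bl_invertible_if_coercive)
        show "(c - t) * (norm x)^2 \<le> inner ((T - t *\<^sub>R id_blinfun) x) x" for x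
          using coercive[of x]
          by (simp add: blinfun.bilinear_simps inner_diff_left power2_norm_eq_inner algebra_simps)
      qed (use 1 in simp)
    next
      case 2
      have "bl_invertible (t *\<^sub>R id_blinfun - T)"
      proof (rule bl_invertible_if_coercive)
        show "(t - norm T) * (norm x)^2 \<le> inner ((t *\<^sub>R id_blinfun - T) x) x" for x
          using inner_apply_le_norm[of T x]
          by (simp add: blinfun.bilinear_simps inner_diff_left power2_norm_eq_inner algebra_simps)
      qed (use 2 in simp)
      from bl_invertible_uminus[OF this] show ?thesis by simp
    qed
    with \<open>t \<in> op_spectrum T\<close> show False by (simp add: op_spectrum_def)
  qed
qed

lemma strictly_positive_op_spectrum:
  fixes T :: "'a::{real_inner,complete_space} \<Rightarrow>\<^sub>L 'a"
  assumes "strictly_positive T"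
  obtains c where "c > 0" and "op_spectrum T \<subseteq> {c .. norm T}"
  using strictly_positive_coercive[OF assms] op_spectrum_subset_if_coercive by metis

section \<open>Spectral mapping for polynomials\<close>

lemma poly_map_poly_of_real:
  "poly (map_poly complex_of_real p) (of_real x) = of_real (poly p x)"
  by (induction p) (auto simp: map_poly_pCons)

lemma map_poly_of_real_add:
  "map_poly complex_of_real (p + q) = map_poly of_real p + map_poly of_real q"
  by (rule poly_eqI) (simp add: coeff_map_poly)

lemma map_poly_of_real_mult:
  "map_poly complex_of_real (p * q) = map_poly of_real p * map_poly of_real q"
  by (rule poly_eqI) (simp add: coeff_map_poly coeff_mult)

lemma quadratic_dvd_if_nonreal_root:
  fixes q :: "real poly" and z :: complex
  assumes root: "poly (map_poly of_real q) z = 0" and nonreal: "Im z \<noteq> 0"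
  shows "[:Re z^2 + Im z^2, -2 * Re z, 1:] dvd q"
proof -
  define d where "d = [:Re z^2 + Im z^2, -2 * Re z, 1:]"
  define m where "m = q mod d"
  have "poly (map_poly complex_of_real d) z = 0"
    by (simp add: d_def map_poly_pCons complex_eq_iff power2_eq_square algebra_simps)
  moreover have "poly (map_poly complex_of_real q) z
      = poly (map_poly complex_of_real (q div d)) z * poly (map_poly complex_of_real d) z
        + poly (map_poly complex_of_real m) z"
    by (subst div_mult_mod_eq[of q d, symmetric])
      (simp only: m_def map_poly_of_real_add map_poly_of_real_mult poly_add poly_mult)
  ultimately have m_root: "poly (map_poly complex_of_real m) z = 0" using root by simp
  have "degree m \<le> 1"
    using degree_mod_less[of d q] by (auto simp: d_def m_def)
  then have m: "m = [:coeff m 0, coeff m 1:]"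
    by (intro poly_eqI) (auto simp: coeff_pCons coeff_eq_0 split: nat.split)
  have "of_real (coeff m 0) + of_real (coeff m 1) * z = 0"
    using m_root by (subst (asm) m) (simp add: map_poly_pCons mult.commute)
  then have "coeff m 0 + coeff m 1 * Re z = 0" "coeff m 1 * Im z = 0"
    by (simp_all add: complex_eq_iff)
  with nonreal have "m = 0" by (subst m) simp
  then show ?thesis by (simp add: d_def m_def mod_eq_0_iff_dvd)
qed

lemma real_poly_linear_or_quadratic_factor:
  fixes q :: "real poly"
  assumes "degree q > 0"
  obtains r q1 where "q = [:- r, 1:] * q1"
    | a b q1 where "b \<noteq> 0" and "q = [:a^2 + b^2, -2 * a, 1:] * q1"
proof -
  have "degree (map_poly complex_of_real q) = degree q" by (rule degree_map_poly) simp
  then have "\<not> constant (poly (map_poly complex_of_real q))"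
    using assms by (simp add: constant_degree)
  then obtain z where z: "poly (map_poly complex_of_real q) z = 0"
    using fundamental_theorem_of_algebra by blast
  show thesis
  proof (cases "Im z = 0")
    case True
    then have "z = of_real (Re z)" by (simp add: complex_eq_iff)
    then have "poly q (Re z) = 0" using z poly_map_poly_of_real[of q "Re z"] by simp
    then obtain q1 where "q = [:- Re z, 1:] * q1" by (auto simp: poly_eq_0_iff_dvd elim: dvdE)
    then show thesis by (rule that(1))
  next
    case False
    obtain q1 where "q = [:Re z^2 + Im z^2, -2 * Re z, 1:] * q1"
      using quadratic_dvd_if_nonreal_root[OF z False] by (elim dvdE)
    with False show thesis by (intro that(2))
  qed
qed

lemma poly_op_invertible_factor:
  fixes T :: "'a::{real_inner,complete_space} \<Rightarrow>\<^sub>L 'a"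
  assumes sa: "self_adjoint T" and "degree q > 0"
    and nonzero: "\<And>t. t \<in> op_spectrum T \<Longrightarrow> poly q t \<noteq> 0"
  obtains f q1 where "q = f * q1" and "degree f > 0" and "bl_invertible (poly_op f T)"
proof -
  consider (linear) r q1 where "q = [:- r, 1:] * q1"
    | (quadratic) a b q1 where "b \<noteq> 0" "q = [:a^2 + b^2, -2 * a, 1:] * q1"
    by (rule real_poly_linear_or_quadratic_factor[OF assms(2)])
  then show thesis
  proof cases
    case (linear r q1)
    then have "r \<notin> op_spectrum T" using nonzero[of r] by auto
    then have "bl_invertible (poly_op [:- r, 1:] T)" by (simp add: poly_op_linear op_spectrum_def)
    then show thesis by (rule that[OF linear, rotated]) simp
  next
    case (quadratic a b q1)
    have "bl_invertible (poly_op [:a^2 + b^2, -2 * a, 1:] T)"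
      by (rule bl_invertible_if_coercive[of "b^2", OF _ poly_op_quadratic_coercive[OF sa]])
        (use quadratic in simp)
    then show thesis by (rule that[OF quadratic(2), rotated]) simp
  qed
qed

lemma bl_invertible_poly_op:
  fixes T :: "'a::{real_inner,complete_space} \<Rightarrow>\<^sub>L 'a"
  assumes sa: "self_adjoint T" and "\<And>t. t \<in> op_spectrum T \<Longrightarrow> poly q t \<noteq> 0"
  shows "bl_invertible (poly_op q T)"
  using assms(2)
proof (induction "degree q" arbitrary: q rule: less_induct)
  case less
  consider "q = 0" | "q \<noteq> 0" "degree q = 0" | "degree q > 0" by blast
  then show ?case
  proof cases
    case 1
    then have "op_spectrum T = {}" using less.prems by auto
    then have "x = 0" for x :: 'a using op_spectrum_nonempty[OF sa, of x] by blast
    then show ?thesis by (rule bl_invertible_trivial_space)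
  next
    case 2
    from \<open>degree q = 0\<close> obtain c where c: "q = [:c:]" by (rule degree_eq_zeroE)
    with \<open>q \<noteq> 0\<close> show ?thesis by (simp add: poly_op_const bl_invertible_scaleR_id)
  next
    case 3
    obtain f q1 where q: "q = f * q1" and f: "degree f > 0" "bl_invertible (poly_op f T)"
      by (rule poly_op_invertible_factor[OF sa 3 less.prems])
    have "f \<noteq> 0" "q1 \<noteq> 0" using 3 q by auto
    then have "degree q1 < degree q" using q f(1) by (simp add: degree_mult_eq)
    moreover have "poly q1 t \<noteq> 0" if "t \<in> op_spectrum T" for t
      using less.prems[OF that] q by auto
    ultimately have "bl_invertible (poly_op q1 T)" by (rule less.hyps)
    with f(2) show ?thesis by (simp add: q poly_op_mult bl_invertible_compose)
  qed
qed

lemma op_spectrum_poly_op_subset: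
  fixes T :: "'a::{real_inner,complete_space} \<Rightarrow>\<^sub>L 'a"
  assumes sa: "self_adjoint T"
  shows "op_spectrum (poly_op q T) \<subseteq> poly q ` op_spectrum T"
proof
  fix s assume "s \<in> op_spectrum (poly_op q T)"
  then have "\<not> bl_invertible (poly_op (q - [:s:]) T)"
    by (simp add: op_spectrum_def poly_op_diff poly_op_const)
  then obtain t where "t \<in> op_spectrum T" "poly (q - [:s:]) t = 0"
    using bl_invertible_poly_op[OF sa] by blast
  then show "s \<in> poly q ` op_spectrum T" by (intro image_eqI[of _ _ t]) simp_all
qed

lemma norm_poly_op_le:
  fixes T :: "'a::{real_inner,complete_space} \<Rightarrow>\<^sub>L 'a"
  assumes sa: "self_adjoint T" and "0 \<le> e"
    and bound: "\<And>t. t \<in> op_spectrum T \<Longrightarrow> \<bar>poly q t\<bar> \<le> e"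
  shows "norm (poly_op q T) \<le> e"
proof (rule ccontr)
  assume "\<not> norm (poly_op q T) \<le> e"
  then have "norm (poly_op q T) > 0" using \<open>0 \<le> e\<close> by linarith
  then obtain s where "s \<in> op_spectrum (poly_op q T)" "\<bar>s\<bar> = norm (poly_op q T)"
    using self_adjoint_norm_in_op_spectrum[OF self_adjoint_poly_op[OF sa]] by force
  with op_spectrum_poly_op_subset[OF sa] obtain t where "t \<in> op_spectrum T" "\<bar>poly q t\<bar> > e"
    using \<open>\<not> norm (poly_op q T) \<le> e\<close> by fastforce
  with bound show False by fastforce
qed

section \<open>Continuous functional calculus\<close>

lemma blinfun_Cauchy_tail:
  fixes X :: "nat \<Rightarrow> 'a::real_normed_vector \<Rightarrow>\<^sub>L 'b::real_normed_vector"
  assumes "Cauchy X" and v: "\<And>x. (\<lambda>n. X n x) \<longlonglongrightarrow> v x" and "0 < e"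
  shows "\<exists>M. \<forall>n\<ge>M. \<forall>x. norm (X n x - v x) \<le> e * norm x"
proof -
  obtain M where M: "\<And>m n. M \<le> m \<Longrightarrow> M \<le> n \<Longrightarrow> norm (X m - X n) < e"
    using CauchyD[OF assms(1,3)] by blast
  have "norm (X n x - v x) \<le> e * norm x" if "M \<le> n" for n x
  proof (rule LIMSEQ_le_const2)
    show "(\<lambda>m. norm (X n x - X m x)) \<longlonglongrightarrow> norm (X n x - v x)"
      by (intro tendsto_intros v)
    have "norm (X n x - X m x) \<le> e * norm x" if "M \<le> m" for m
    proof -
      have "norm (X n x - X m x) \<le> norm (X n - X m) * norm x"
        by (metis blinfun.diff_left norm_blinfun)
      also have "\<dots> \<le> e * norm x" using M[OF \<open>M \<le> n\<close> that] by (intro mult_right_mono) auto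
      finally show ?thesis .
    qed
    then show "\<exists>N. \<forall>m\<ge>N. norm (X n x - X m x) \<le> e * norm x" by blast
  qed
  then show ?thesis by blast
qed

lemma bounded_linear_blinfun_limit:
  fixes X :: "nat \<Rightarrow> 'a::real_normed_vector \<Rightarrow>\<^sub>L 'b::real_normed_vector"
  assumes "Cauchy X" and v: "\<And>x. (\<lambda>n. X n x) \<longlonglongrightarrow> v x"
  shows "bounded_linear v"
proof -
  obtain M1 where M1: "\<And>n x. M1 \<le> n \<Longrightarrow> norm (X n x - v x) \<le> 1 * norm x"
    using blinfun_Cauchy_tail[OF assms(1) v zero_less_one] by blast
  show "bounded_linear v"
  proof (rule bounded_linear_intro[where K = "norm (X M1) + 1"])
    show "v (x + y) = v x + v y" for x y
    proof (rule LIMSEQ_unique[OF v])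
      show "(\<lambda>n. X n (x + y)) \<longlonglongrightarrow> v x + v y"
        by (simp add: blinfun.add_right tendsto_add v)
    qed
    show "v (r *\<^sub>R x) = r *\<^sub>R v x" for r x
    proof (rule LIMSEQ_unique[OF v])
      show "(\<lambda>n. X n (r *\<^sub>R x)) \<longlonglongrightarrow> r *\<^sub>R v x"
        by (simp add: blinfun.scaleR_right tendsto_scaleR v)
    qed
    show "norm (v x) \<le> norm x * (norm (X M1) + 1)" for x
    proof -
      have "norm (v x) \<le> norm (X M1 x) + norm (X M1 x - v x)"
        by (metis norm_minus_commute norm_triangle_sub)
      also have "\<dots> \<le> norm (X M1) * norm x + 1 * norm x"
        by (intro add_mono norm_blinfun M1) simp
      finally show ?thesis by (simp add: algebra_simps)
    qed
  qed
qed

text \<open>The library proves completeness of \<open>'a \<Rightarrow>\<^sub>L 'b\<close> only for \<open>'b :: banach\<close>, a class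
  that the sort \<open>{real_inner, complete_space}\<close> used here is not known to belong to.\<close>
lemma blinfun_Cauchy_convergent:
  fixes X :: "nat \<Rightarrow> 'a::real_normed_vector \<Rightarrow>\<^sub>L 'b::{real_normed_vector,complete_space}"
  assumes "Cauchy X"
  shows "convergent X"
proof -
  obtain v where v: "\<And>x. (\<lambda>n. X n x) \<longlonglongrightarrow> v x"
    using bounded_linear.Cauchy[OF bounded_linear_apply_blinfun assms, THEN Cauchy_convergent]
    unfolding convergent_def by metis
  have bl: "bounded_linear v" by (rule bounded_linear_blinfun_limit[OF assms v])
  have "X \<longlonglongrightarrow> Blinfun v"
  proof (rule LIMSEQ_I)
    fix r :: real assume "0 < r"
    obtain M where M: "\<And>n x. M \<le> n \<Longrightarrow> norm (X n x - v x) \<le> r / 2 * norm x"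
      using blinfun_Cauchy_tail[OF assms v, of "r / 2"] \<open>0 < r\<close> by auto
    have "norm (X n - Blinfun v) < r" if "M \<le> n" for n
    proof -
      have "norm (X n - Blinfun v) \<le> r / 2"
        by (rule norm_blinfun_bound)
          (use \<open>0 < r\<close> M[OF that] in \<open>simp_all add: blinfun.diff_left bounded_linear_Blinfun_apply[OF bl]\<close>)
      also have "\<dots> < r" using \<open>0 < r\<close> by simp
      finally show ?thesis .
    qed
    then show "\<exists>no. \<forall>n\<ge>no. norm (X n - Blinfun v) < r" by blast
  qed
  then show ?thesis by (rule convergentI)
qed

lemma real_polynomial_function_imp_poly:
  fixes g :: "real \<Rightarrow> real"
  assumes "real_polynomial_function g"
  shows "\<exists>p. \<forall>x. g x = poly p x"
  using assms
proof (induction rule: real_polynomial_function.induct)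
  case (linear f)
  then obtain c where "f = (\<lambda>x. x * c)" using real_bounded_linear by blast
  then show ?case by (intro exI[of _ "[:0, c:]"]) simp
next
  case (const c)
  show ?case by (intro exI[of _ "[:c:]"]) simp
next
  case (add f g)
  then obtain p q where "\<forall>x. f x = poly p x" "\<forall>x. g x = poly q x" by blast
  then show ?case by (intro exI[of _ "p + q"]) simp
next
  case (mult f g)
  then obtain p q where "\<forall>x. f x = poly p x" "\<forall>x. g x = poly q x" by blast
  then show ?case by (intro exI[of _ "p * q"]) simp
qed

lemma polynomial_uniform_approximation:
  fixes f :: "real \<Rightarrow> real"
  assumes "continuous_on {a..b} f"
  obtains p :: "nat \<Rightarrow> real poly" where "uniform_limit {a..b} (\<lambda>n x. poly (p n) x) f sequentially"
proof -
  have "\<exists>q. \<forall>x\<in>{a..b}. \<bar>poly q x - f x\<bar> < 1 / Suc n" for n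
  proof -
    obtain g where "real_polynomial_function g"
      and g: "\<And>x. x \<in> {a..b} \<Longrightarrow> \<bar>f x - g x\<bar> < 1 / Suc n"
      using Stone_Weierstrass_real_polynomial_function[OF compact_Icc assms, of "1 / Suc n"] by auto
    then obtain q where "\<forall>x. g x = poly q x" using real_polynomial_function_imp_poly by blast
    with g show ?thesis by (metis abs_minus_commute)
  qed
  then obtain p where p: "\<And>n x. x \<in> {a..b} \<Longrightarrow> \<bar>poly (p n) x - f x\<bar> < 1 / Suc n" by metis
  have "uniform_limit {a..b} (\<lambda>n x. poly (p n) x) f sequentially"
  proof (rule uniform_limitI)
    fix e :: real assume "0 < e"
    then obtain N where N: "1 / Suc N < e" by (rule nat_approx_posE)
    have "dist (poly (p n) x) (f x) < e" if "N \<le> n" "x \<in> {a..b}" for n x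
    proof -
      have "1 / real (Suc n) \<le> 1 / Suc N" using that(1) by (intro divide_left_mono) auto
      with p[OF that(2), of n] N show ?thesis by (simp add: dist_real_def)
    qed
    then show "\<forall>\<^sub>F n in sequentially. \<forall>x\<in>{a..b}. dist (poly (p n) x) (f x) < e"
      unfolding eventually_sequentially by blast
  qed
  then show thesis by (rule that)
qed

lemma poly_op_uniformly_close:
  fixes T :: "'a::{real_inner,complete_space} \<Rightarrow>\<^sub>L 'a"
  assumes sa: "self_adjoint T"
    and p: "uniform_limit (op_spectrum T) (\<lambda>n x. poly (p n) x) f sequentially"
    and q: "uniform_limit (op_spectrum T) (\<lambda>n x. poly (q n) x) f sequentially"
    and "0 < e"
  shows "\<exists>M. \<forall>m\<ge>M. \<forall>n\<ge>M. norm (poly_op (p m) T - poly_op (q n) T) < e"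
proof -
  obtain Mp where Mp: "\<And>n x. Mp \<le> n \<Longrightarrow> x \<in> op_spectrum T \<Longrightarrow> \<bar>poly (p n) x - f x\<bar> < e / 4"
    using uniform_limitD[OF p, of "e / 4"] \<open>0 < e\<close> by (auto simp: eventually_sequentially dist_real_def)
  obtain Mq where Mq: "\<And>n x. Mq \<le> n \<Longrightarrow> x \<in> op_spectrum T \<Longrightarrow> \<bar>poly (q n) x - f x\<bar> < e / 4"
    using uniform_limitD[OF q, of "e / 4"] \<open>0 < e\<close> by (auto simp: eventually_sequentially dist_real_def)
  have "norm (poly_op (p m) T - poly_op (q n) T) < e" if "max Mp Mq \<le> m" "max Mp Mq \<le> n" for m n
  proof -
    have "norm (poly_op (p m - q n) T) \<le> e / 2"
    proof (rule norm_poly_op_le[OF sa])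
      show "\<bar>poly (p m - q n) t\<bar> \<le> e / 2" if "t \<in> op_spectrum T" for t
      proof -
        have "\<bar>poly (p m) t - f t\<bar> < e / 4" "\<bar>poly (q n) t - f t\<bar> < e / 4"
          using Mp Mq that \<open>max Mp Mq \<le> m\<close> \<open>max Mp Mq \<le> n\<close> by simp_all
        then show ?thesis unfolding poly_diff by arith
      qed
    qed (use \<open>0 < e\<close> in simp)
    with \<open>0 < e\<close> show ?thesis by (simp add: poly_op_diff)
  qed
  then show ?thesis by blast
qed

lemma tendsto_fcalc:
  fixes T :: "'a::{real_inner,complete_space} \<Rightarrow>\<^sub>L 'a"
  assumes sa: "self_adjoint T"
    and p: "uniform_limit (op_spectrum T) (\<lambda>n x. poly (p n) x) f sequentially"
  shows "(\<lambda>n. poly_op (p n) T) \<longlonglongrightarrow> fcalc f T"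
proof -
  have "Cauchy (\<lambda>n. poly_op (p n) T)"
    by (rule CauchyI) (rule poly_op_uniformly_close[OF sa p p])
  then obtain S where S: "(\<lambda>n. poly_op (p n) T) \<longlonglongrightarrow> S"
    using blinfun_Cauchy_convergent unfolding convergent_def by blast
  have limit: "(\<lambda>n. poly_op (q n) T) \<longlonglongrightarrow> S"
    if q: "uniform_limit (op_spectrum T) (\<lambda>n x. poly (q n) x) f sequentially" for q
  proof -
    have "(\<lambda>n. poly_op (q n) T - poly_op (p n) T) \<longlonglongrightarrow> 0"
    proof (rule LIMSEQ_I)
      fix e :: real assume "0 < e"
      then show "\<exists>M. \<forall>n\<ge>M. norm (poly_op (q n) T - poly_op (p n) T - 0) < e"
        using poly_op_uniformly_close[OF sa q p] by fastforce
    qed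
    from tendsto_add[OF this S] show ?thesis by simp
  qed
  have "fcalc f T = S"
    unfolding fcalc_def
  proof (rule the_equality)
    show "\<forall>q. uniform_limit (op_spectrum T) (\<lambda>n x. poly (q n) x) f sequentially
        \<longrightarrow> (\<lambda>n. poly_op (q n) T) \<longlonglongrightarrow> S"
      using limit by blast
    show "S' = S" if "\<forall>q. uniform_limit (op_spectrum T) (\<lambda>n x. poly (q n) x) f sequentially
        \<longrightarrow> (\<lambda>n. poly_op (q n) T) \<longlonglongrightarrow> S'" for S'
      using that p S LIMSEQ_unique by blast
  qed
  with S show ?thesis by simp
qed

context
  fixes T :: "'a::{real_inner,complete_space} \<Rightarrow>\<^sub>L 'a" and a b :: real
  assumes sa: "self_adjoint T" and spectrum: "op_spectrum T \<subseteq> {a..b}"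
begin

lemma tendsto_fcalc_Icc:
  assumes "uniform_limit {a..b} (\<lambda>n x. poly (p n) x) f sequentially"
  shows "(\<lambda>n. poly_op (p n) T) \<longlonglongrightarrow> fcalc f T"
  by (rule tendsto_fcalc[OF sa uniform_limit_on_subset[OF assms spectrum]])

lemma fcalc_cong:
  assumes f: "continuous_on {a..b} f" and eq: "\<And>x. x \<in> {a..b} \<Longrightarrow> f x = g x"
  shows "fcalc f T = fcalc g T"
proof -
  obtain p where p: "uniform_limit {a..b} (\<lambda>n x. poly (p n) x) f sequentially"
    by (rule polynomial_uniform_approximation[OF f])
  then have "uniform_limit {a..b} (\<lambda>n x. poly (p n) x) g sequentially"
    using uniform_limit_cong'[of "{a..b}" "\<lambda>n x. poly (p n) x" "\<lambda>n x. poly (p n) x" f g] eq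
    by simp
  with p show ?thesis using tendsto_fcalc_Icc LIMSEQ_unique by metis
qed

lemma fcalc_const: "fcalc (\<lambda>x. c) T = c *\<^sub>R id_blinfun"
proof -
  have "(\<lambda>n. poly_op [:c:] T) \<longlonglongrightarrow> fcalc (\<lambda>x. c) T"
    by (rule tendsto_fcalc_Icc) (simp add: uniform_limit_const)
  then show ?thesis by (simp add: poly_op_const LIMSEQ_const_iff)
qed

lemma fcalc_scaleR:
  assumes f: "continuous_on {a..b} f"
  shows "fcalc (\<lambda>x. c * f x) T = c *\<^sub>R fcalc f T"
proof -
  obtain p where p: "uniform_limit {a..b} (\<lambda>n x. poly (p n) x) f sequentially"
    by (rule polynomial_uniform_approximation[OF f])
  have "uniform_limit {a..b} (\<lambda>n x. poly (smult c (p n)) x) (\<lambda>x. c * f x) sequentially"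
    using bounded_linear.uniform_limit[OF bounded_linear_mult_right p] by simp
  then have "(\<lambda>n. poly_op (smult c (p n)) T) \<longlonglongrightarrow> fcalc (\<lambda>x. c * f x) T"
    by (rule tendsto_fcalc_Icc)
  moreover have "(\<lambda>n. poly_op (smult c (p n)) T) \<longlonglongrightarrow> c *\<^sub>R fcalc f T"
    unfolding poly_op_smult by (intro tendsto_scaleR tendsto_const tendsto_fcalc_Icc p)
  ultimately show ?thesis by (rule LIMSEQ_unique)
qed

lemma fcalc_diff:
  assumes f: "continuous_on {a..b} f" and g: "continuous_on {a..b} g"
  shows "fcalc (\<lambda>x. f x - g x) T = fcalc f T - fcalc g T"
proof -
  obtain p where p: "uniform_limit {a..b} (\<lambda>n x. poly (p n) x) f sequentially"
    by (rule polynomial_uniform_approximation[OF f])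
  obtain q where q: "uniform_limit {a..b} (\<lambda>n x. poly (q n) x) g sequentially"
    by (rule polynomial_uniform_approximation[OF g])
  have "uniform_limit {a..b} (\<lambda>n x. poly (p n - q n) x) (\<lambda>x. f x - g x) sequentially"
    using uniform_limit_minus[OF p q] by simp
  then have "(\<lambda>n. poly_op (p n - q n) T) \<longlonglongrightarrow> fcalc (\<lambda>x. f x - g x) T"
    by (rule tendsto_fcalc_Icc)
  moreover have "(\<lambda>n. poly_op (p n - q n) T) \<longlonglongrightarrow> fcalc f T - fcalc g T"
    unfolding poly_op_diff by (intro tendsto_diff tendsto_fcalc_Icc p q)
  ultimately show ?thesis by (rule LIMSEQ_unique)
qed

lemma fcalc_mult:
  assumes f: "continuous_on {a..b} f" and g: "continuous_on {a..b} g"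
  shows "fcalc (\<lambda>x. f x * g x) T = fcalc f T o\<^sub>L fcalc g T"
proof -
  obtain p where p: "uniform_limit {a..b} (\<lambda>n x. poly (p n) x) f sequentially"
    by (rule polynomial_uniform_approximation[OF f])
  obtain q where q: "uniform_limit {a..b} (\<lambda>n x. poly (q n) x) g sequentially"
    by (rule polynomial_uniform_approximation[OF g])
  have "bounded (f ` {a..b})" "bounded (g ` {a..b})"
    using f g by (simp_all add: compact_imp_bounded compact_continuous_image)
  then have "uniform_limit {a..b} (\<lambda>n x. poly (p n * q n) x) (\<lambda>x. f x * g x) sequentially"
    using uniform_lim_mult[OF p q] by simp
  then have "(\<lambda>n. poly_op (p n * q n) T) \<longlonglongrightarrow> fcalc (\<lambda>x. f x * g x) T"
    by (rule tendsto_fcalc_Icc)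
  moreover have "(\<lambda>n. poly_op (p n * q n) T) \<longlonglongrightarrow> (fcalc f T o\<^sub>L fcalc g T)"
    unfolding poly_op_mult
    by (rule bounded_bilinear.tendsto[OF bounded_bilinear_blinfun_compose])
      (use tendsto_fcalc_Icc p q in auto)
  ultimately show ?thesis by (rule LIMSEQ_unique)
qed

lemma self_adjoint_fcalc:
  assumes f: "continuous_on {a..b} f"
  shows "self_adjoint (fcalc f T)"
  unfolding self_adjoint_def
proof (intro allI)
  fix x y
  obtain p where "uniform_limit {a..b} (\<lambda>n x. poly (p n) x) f sequentially"
    by (rule polynomial_uniform_approximation[OF f])
  then have L: "(\<lambda>n. poly_op (p n) T) \<longlonglongrightarrow> fcalc f T" by (rule tendsto_fcalc_Icc)
  have "(\<lambda>n. inner (poly_op (p n) T x) y) \<longlonglongrightarrow> inner (fcalc f T x) y"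
    by (intro tendsto_inner blinfun.tendsto[OF L] tendsto_const)
  moreover have "(\<lambda>n. inner (poly_op (p n) T x) y) \<longlonglongrightarrow> inner x (fcalc f T y)"
    unfolding self_adjointD[OF self_adjoint_poly_op[OF sa]]
    by (intro tendsto_inner blinfun.tendsto[OF L] tendsto_const)
  ultimately show "inner (fcalc f T x) y = inner x (fcalc f T y)" by (rule LIMSEQ_unique)
qed

lemma fcalc_nonneg:
  assumes f: "continuous_on {a..b} f" and nonneg: "\<And>x. x \<in> {a..b} \<Longrightarrow> 0 \<le> f x"
  shows "0 \<le> inner (fcalc f T x) x"
proof -
  have sqrt_f: "continuous_on {a..b} (\<lambda>x. sqrt (f x))" by (intro continuous_intros f)
  have "fcalc f T = fcalc (\<lambda>x. sqrt (f x) * sqrt (f x)) T"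
    by (rule fcalc_cong[OF f]) (simp add: nonneg)
  also have "\<dots> = fcalc (\<lambda>x. sqrt (f x)) T o\<^sub>L fcalc (\<lambda>x. sqrt (f x)) T"
    by (rule fcalc_mult[OF sqrt_f sqrt_f])
  finally have "inner (fcalc f T x) x
      = inner (fcalc (\<lambda>x. sqrt (f x)) T x) (fcalc (\<lambda>x. sqrt (f x)) T x)"
    by (simp add: self_adjointD[OF self_adjoint_fcalc[OF sqrt_f]])
  then show ?thesis by simp
qed

lemma op_le_fcalc:
  assumes f: "continuous_on {a..b} f" and g: "continuous_on {a..b} g"
    and le: "\<And>x. x \<in> {a..b} \<Longrightarrow> f x \<le> g x"
  shows "op_le (fcalc f T) (fcalc g T)"
  unfolding op_le_def
proof
  fix x
  have "0 \<le> inner (fcalc (\<lambda>t. g t - f t) T x) x"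
    by (rule fcalc_nonneg) (use f g le in \<open>auto intro: continuous_intros\<close>)
  then show "0 \<le> inner ((fcalc g T - fcalc f T) x) x"
    by (simp add: fcalc_diff[OF g f] blinfun.diff_left)
qed

end

section \<open>Powers of strictly positive operators\<close>

lemma strictly_positive_self_adjoint: "strictly_positive A \<Longrightarrow> self_adjoint A"
  by (simp add: strictly_positive_def)

lemma self_adjoint_op_powr:
  assumes "strictly_positive A"
  shows "self_adjoint (op_powr A r)"
proof -
  have sa: "self_adjoint A" by (rule strictly_positive_self_adjoint[OF assms])
  obtain c where c: "c > 0" "op_spectrum A \<subseteq> {c .. norm A}"
    by (rule strictly_positive_op_spectrum[OF assms])
  show ?thesis
    unfolding op_powr_def by (rule self_adjoint_fcalc[OF sa c(2)]) (use c(1) in \<open>intro continuous_intros; auto\<close>)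
qed

lemma op_powr_compose:
  assumes "strictly_positive A"
  shows "op_powr A r o\<^sub>L op_powr A s = op_powr A (r + s)"
proof -
  have sa: "self_adjoint A" by (rule strictly_positive_self_adjoint[OF assms])
  obtain c where c: "c > 0" "op_spectrum A \<subseteq> {c .. norm A}"
    by (rule strictly_positive_op_spectrum[OF assms])
  have cont: "continuous_on {c .. norm A} (\<lambda>t. t powr e)" for e
    using c(1) by (intro continuous_intros) auto
  have "op_powr A r o\<^sub>L op_powr A s = fcalc (\<lambda>t. t powr r * t powr s) A"
    unfolding op_powr_def by (rule fcalc_mult[OF sa c(2) cont cont, symmetric])
  also have "\<dots> = op_powr A (r + s)"
    unfolding op_powr_def
    by (rule fcalc_cong[OF sa c(2) continuous_on_mult[OF cont cont]]) (use c(1) in \<open>auto simp: powr_add\<close>)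
  finally show ?thesis .
qed

lemma op_powr_0:
  assumes "strictly_positive A"
  shows "op_powr A 0 = id_blinfun"
proof -
  have sa: "self_adjoint A" by (rule strictly_positive_self_adjoint[OF assms])
  obtain c where c: "c > 0" "op_spectrum A \<subseteq> {c .. norm A}"
    by (rule strictly_positive_op_spectrum[OF assms])
  have cont: "continuous_on {c .. norm A} (\<lambda>t. t powr 0)"
    using c(1) by (intro continuous_intros) auto
  have "op_powr A 0 = fcalc (\<lambda>t. 1) A"
    unfolding op_powr_def by (rule fcalc_cong[OF sa c(2) cont]) (use c(1) in auto)
  then show ?thesis by (simp add: fcalc_const[OF sa c(2)])
qed

lemma bl_invertible_op_powr:
  assumes "strictly_positive A"
  shows "bl_invertible (op_powr A r)"
  unfolding bl_invertible_def
  by (rule exI[of _ "op_powr A (- r)"]) (simp add: op_powr_compose[OF assms] op_powr_0[OF assms])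

lemma strictly_positive_congruence:
  assumes B: "strictly_positive B" and S: "self_adjoint S" "bl_invertible S"
  shows "strictly_positive (S o\<^sub>L B o\<^sub>L S)"
proof -
  have saB: "self_adjoint B" and posB: "\<And>x. 0 \<le> inner (B x) x" and invB: "bl_invertible B"
    using B unfolding strictly_positive_def by auto
  have "self_adjoint (S o\<^sub>L B o\<^sub>L S)"
    unfolding self_adjoint_def by (simp add: self_adjointD[OF S(1)] self_adjointD[OF saB])
  moreover have "0 \<le> inner ((S o\<^sub>L B o\<^sub>L S) x) x" for x
    using posB[of "S x"] by (simp add: self_adjointD[OF S(1)])
  moreover have "bl_invertible (S o\<^sub>L B o\<^sub>L S)"
    by (intro bl_invertible_compose invB S(2))
  ultimately show ?thesis unfolding strictly_positive_def by blast
qed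

lemma strictly_positive_inner_op:
  assumes "strictly_positive A" and "strictly_positive B"
  shows "strictly_positive (inner_op A B)"
  unfolding inner_op_def
  by (rule strictly_positive_congruence[OF assms(2)])
    (simp_all add: self_adjoint_op_powr bl_invertible_op_powr assms(1))

lemma op_le_congruence:
  assumes S: "self_adjoint S" and le: "op_le F G"
  shows "op_le (S o\<^sub>L F o\<^sub>L S) (S o\<^sub>L G o\<^sub>L S)"
  unfolding op_le_def
proof
  fix x
  have "inner (((S o\<^sub>L G o\<^sub>L S) - (S o\<^sub>L F o\<^sub>L S)) x) x = inner ((G - F) (S x)) (S x)"
    by (simp add: blinfun.diff_left self_adjointD[OF S] inner_diff_left)
  then show "0 \<le> inner (((S o\<^sub>L G o\<^sub>L S) - (S o\<^sub>L F o\<^sub>L S)) x) x"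
    using le unfolding op_le_def by simp
qed

lemma op_le_fcalc_strictly_positive:
  fixes X :: "'a::{real_inner,complete_space} \<Rightarrow>\<^sub>L 'a"
  assumes "strictly_positive X"
    and f: "continuous_on {0<..} f" and g: "continuous_on {0<..} g"
    and le: "\<And>t. 0 < t \<Longrightarrow> f t \<le> g t"
  shows "op_le (fcalc f X) (fcalc g X)"
proof -
  have sa: "self_adjoint X" by (rule strictly_positive_self_adjoint[OF assms(1)])
  obtain c where c: "c > 0" "op_spectrum X \<subseteq> {c .. norm X}"
    by (rule strictly_positive_op_spectrum[OF assms(1)])
  have sub: "{c .. norm X} \<subseteq> {0<..}" using c(1) by auto
  show ?thesis
    by (rule op_le_fcalc[OF sa c(2) continuous_on_subset[OF f sub] continuous_on_subset[OF g sub]])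
      (use le c(1) in auto)
qed

lemma op_powr_compose_op_log:
  assumes "strictly_positive X"
  shows "op_powr X r o\<^sub>L op_log X = fcalc (\<lambda>t. t powr r * ln t) X"
proof -
  have sa: "self_adjoint X" by (rule strictly_positive_self_adjoint[OF assms])
  obtain c where c: "c > 0" "op_spectrum X \<subseteq> {c .. norm X}"
    by (rule strictly_positive_op_spectrum[OF assms])
  show ?thesis
    unfolding op_powr_def op_log_def
    by (rule fcalc_mult[OF sa c(2), symmetric]) (use c(1) in \<open>auto intro!: continuous_intros\<close>)
qed

lemma scaleR_op_powr_diff:
  assumes "strictly_positive X"
  shows "k *\<^sub>R (op_powr X r - op_powr X s) = fcalc (\<lambda>t. k * (t powr r - t powr s)) X"
proof -
  have sa: "self_adjoint X" by (rule strictly_positive_self_adjoint[OF assms])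
  obtain c where c: "c > 0" "op_spectrum X \<subseteq> {c .. norm X}"
    by (rule strictly_positive_op_spectrum[OF assms])
  have cont: "continuous_on {c .. norm X} (\<lambda>t. t powr e)" for e
    using c(1) by (intro continuous_intros) auto
  show ?thesis
    unfolding op_powr_def
    by (simp add: fcalc_scaleR[OF sa c(2)] fcalc_diff[OF sa c(2) cont cont] continuous_on_diff[OF cont cont])
qed

section \<open>Entropy bounds\<close>

text \<open>With \<open>y = \<lambda> ln t\<close> the three quantities are \<open>t\<^sup>\<nu>\<close> times \<open>y\<close>, \<open>e\<^sup>y - 1\<close> and \<open>y e\<^sup>y\<close>, divided by \<open>\<lambda>\<close>;
  the inequalities are \<open>1 + y \<le> e\<^sup>y\<close> applied to \<open>y\<close> and to \<open>-y\<close>.\<close>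
lemma powr_difference_quotient_bounds:
  fixes t lam \<nu> :: real
  assumes t: "0 < t" and lam: "0 < lam"
  shows "t powr \<nu> * ln t \<le> (t powr (\<nu> + lam) - t powr \<nu>) / lam"
    and "(t powr (\<nu> + lam) - t powr \<nu>) / lam \<le> t powr (\<nu> + lam) * ln t"
proof -
  define y where "y = lam * ln t"
  have t_lam: "t powr lam = exp y" using t by (simp add: powr_def y_def mult.commute)
  have quotient: "(t powr (\<nu> + lam) - t powr \<nu>) / lam = t powr \<nu> * ((exp y - 1) / lam)"
    by (simp add: powr_add t_lam right_diff_distrib)
  have ln_t: "ln t = y / lam" using lam by (simp add: y_def)
  have "y \<le> exp y - 1" using exp_ge_add_one_self[of y] by linarith
  then show "t powr \<nu> * ln t \<le> (t powr (\<nu> + lam) - t powr \<nu>) / lam"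
    unfolding quotient ln_t using lam by (intro mult_left_mono divide_right_mono) auto
  have "(1 - y) * exp y \<le> exp (- y) * exp y"
    using exp_ge_add_one_self[of "- y"] by (intro mult_right_mono) auto
  then have "exp y - 1 \<le> y * exp y" by (simp add: exp_minus algebra_simps)
  then have "t powr \<nu> * ((exp y - 1) / lam) \<le> t powr \<nu> * (exp y * y / lam)"
    using lam by (intro mult_left_mono divide_right_mono) (auto simp: mult.commute)
  also have "\<dots> = t powr (\<nu> + lam) * ln t"
    by (simp add: ln_t powr_add t_lam mult.assoc)
  finally show "(t powr (\<nu> + lam) - t powr \<nu>) / lam \<le> t powr (\<nu> + lam) * ln t"
    unfolding quotient .
qed

lemma rel_entropy_eq_congruence:
  "rel_entropy \<nu> A B
    = op_powr A (1/2) o\<^sub>L (op_powr (inner_op A B) \<nu> o\<^sub>L op_log (inner_op A B)) o\<^sub>L op_powr A (1/2)"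
  unfolding rel_entropy_def by (rule blinfun_eqI) simp

lemma tsallis_one_eq_congruence:
  "tsallis \<nu> 1 lam A B = op_powr A (1/2)
    o\<^sub>L ((1 / lam) *\<^sub>R (op_powr (inner_op A B) (\<nu> + lam) - op_powr (inner_op A B) \<nu>))
    o\<^sub>L op_powr A (1/2)"
  unfolding tsallis_def gmean_def
  by (rule blinfun_eqI) (simp add: blinfun.bilinear_simps)

lemma tsallis_shift: "tsallis \<mu> k l A B = tsallis (\<mu> + (of_int k - 1) * l) 1 l A B"
  unfolding tsallis_def by (simp add: algebra_simps)

lemma tsallis_uminus: "tsallis \<mu> k (- l) A B = tsallis (\<mu> - of_int k * l) 1 l A B"
  unfolding tsallis_def by (simp add: algebra_simps)

lemma rel_entropy_le_tsallis:
  assumes A: "strictly_positive A" and B: "strictly_positive B" and lam: "0 < lam"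
  shows "op_le (rel_entropy \<nu> A B) (tsallis \<nu> 1 lam A B)"
proof -
  have X: "strictly_positive (inner_op A B)" by (rule strictly_positive_inner_op[OF A B])
  have "op_le (fcalc (\<lambda>t. t powr \<nu> * ln t) (inner_op A B))
      (fcalc (\<lambda>t. 1 / lam * (t powr (\<nu> + lam) - t powr \<nu>)) (inner_op A B))"
  proof (rule op_le_fcalc_strictly_positive[OF X])
    show "t powr \<nu> * ln t \<le> 1 / lam * (t powr (\<nu> + lam) - t powr \<nu>)" if "0 < t" for t
      using powr_difference_quotient_bounds(1)[OF that lam] by simp
  qed (use lam in \<open>auto intro!: continuous_intros\<close>)
  then show ?thesis
    unfolding rel_entropy_eq_congruence tsallis_one_eq_congruence
      op_powr_compose_op_log[OF X] scaleR_op_powr_diff[OF X]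
    by (rule op_le_congruence[OF self_adjoint_op_powr[OF A]])
qed

lemma tsallis_le_rel_entropy:
  assumes A: "strictly_positive A" and B: "strictly_positive B" and lam: "0 < lam"
  shows "op_le (tsallis \<nu> 1 lam A B) (rel_entropy (\<nu> + lam) A B)"
proof -
  have X: "strictly_positive (inner_op A B)" by (rule strictly_positive_inner_op[OF A B])
  have "op_le (fcalc (\<lambda>t. 1 / lam * (t powr (\<nu> + lam) - t powr \<nu>)) (inner_op A B))
      (fcalc (\<lambda>t. t powr (\<nu> + lam) * ln t) (inner_op A B))"
  proof (rule op_le_fcalc_strictly_positive[OF X])
    show "1 / lam * (t powr (\<nu> + lam) - t powr \<nu>) \<le> t powr (\<nu> + lam) * ln t" if "0 < t" for t
      using powr_difference_quotient_bounds(2)[OF that lam] by simp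
  qed (use lam in \<open>auto intro!: continuous_intros\<close>)
  then show ?thesis
    unfolding rel_entropy_eq_congruence tsallis_one_eq_congruence
      op_powr_compose_op_log[OF X] scaleR_op_powr_diff[OF X]
    by (rule op_le_congruence[OF self_adjoint_op_powr[OF A]])
qed

theorem corollary2:
  fixes A B :: "'a::{real_inner,complete_space} \<Rightarrow>\<^sub>L 'a"
    and \<mu> lam :: real
  assumes "strictly_positive A" and "strictly_positive B" and "lam > 0"
  shows "op_le (rel_entropy (\<mu> - 2*lam) A B) (tsallis \<mu> 2 (-lam) A B)
       \<and> op_le (tsallis \<mu> 2 (-lam) A B) (rel_entropy (\<mu> - lam) A B)
       \<and> op_le (rel_entropy (\<mu> - lam) A B) (tsallis \<mu> 1 (-lam) A B)
       \<and> op_le (tsallis \<mu> 1 (-lam) A B) (rel_entropy \<mu> A B)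
       \<and> op_le (rel_entropy \<mu> A B) (tsallis \<mu> 1 lam A B)
       \<and> op_le (tsallis \<mu> 1 lam A B) (rel_entropy (\<mu> + lam) A B)
       \<and> op_le (rel_entropy (\<mu> + lam) A B) (tsallis \<mu> 2 lam A B)
       \<and> op_le (tsallis \<mu> 2 lam A B) (rel_entropy (\<mu> + 2*lam) A B)"
proof -
  have lower: "op_le (rel_entropy \<nu> A B) (tsallis \<nu> 1 lam A B)" for \<nu>
    by (rule rel_entropy_le_tsallis[OF assms])
  have upper: "op_le (tsallis \<nu> 1 lam A B) (rel_entropy (\<nu> + lam) A B)" for \<nu>
    by (rule tsallis_le_rel_entropy[OF assms])
  have "tsallis \<mu> 2 (-lam) A B = tsallis (\<mu> - 2*lam) 1 lam A B"
    and "tsallis \<mu> 1 (-lam) A B = tsallis (\<mu> - lam) 1 lam A B"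
    and "tsallis \<mu> 2 lam A B = tsallis (\<mu> + lam) 1 lam A B"
    by (simp_all add: tsallis_uminus tsallis_shift[of \<mu> 2])
  moreover have "\<mu> - 2*lam + lam = \<mu> - lam" "\<mu> - lam + lam = \<mu>" "\<mu> + lam + lam = \<mu> + 2*lam"
    by simp_all
  ultimately show ?thesis using lower upper by metis
qed

end
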